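(* Under Assumption (A), there exist a constant $B<\infty$ and an integer $N$ such that for all $n\ge N$ and every state $x=(A,\mu,\theta_1,\dots,\theta_n)\in\mathcal X$, $$\mathbb E\big[f(X^{(k+1)})\mid X^{(k)}=x\big]\le\left(\frac{V^2+2VA}{V^2+2VA+A^2}\right)^2 f(x)+B .$$
   Context: Fix $V>0$, $a>0$, $b_0>0$. For each $n\ge2$ observed data $Y_1,\dots,Y_n\in\mathbb R$ are given; $\bar Y=\frac1n\sum_iY_i$, $\Delta=\Delta_n=\sum_{i=1}^n(Y_i-\bar Y)^2$. Model: $Y_i\mid\theta_i\sim\mathcal N(\theta_i,V)$, $\theta_i\mid\mu,A\sim\mathcal N(\mu,A)$ independently ($1\le i\le n$), flat prior on $\mu\in\mathbb R$, $A\sim\mathrm{IG}(a,b_0)$ (density $\propto A^{-a-1}e^{-b_0/A}$ on $(0,\infty)$). The posterior $\pi$ on $\mathcal X=(0,\infty)\times\mathbb R\times\mathbb R^n$, $x=(A,\mu,\theta_1,\dots,\theta_n)$, has density $\propto A^{-a-1}e^{-b_0/A}\prod_{i=1}^n A^{-1/2}e^{-(\theta_i-\mu)^2/(2A)}e^{-(Y_i-\theta_i)^2/(2V)}$. Write $\bar\theta=\frac1n\sum_i\theta_i$. The Gibbs sampler $X^{(k)}=(A^{(k)},\mu^{(k)},\theta^{(k)}_1,\dots,\theta^{(k)}_n)$ updates: $\mu^{(k+1)}\sim\mathcal N(\bar\theta^{(k)},A^{(k)}/n)$; then independently $\theta_i^{(k+1)}\sim\mathcal N\big(\frac{\mu^{(k+1)}V+Y_iA^{(k)}}{V+A^{(k)}},\frac{A^{(k)}V}{V+A^{(k)}}\big)$,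 $i=1,\dots,n$; then $A^{(k+1)}\sim\mathrm{IG}\big(a+\frac{n-1}2,\ b_0+\frac12\sum_i(\theta_i^{(k+1)}-\bar\theta^{(k+1)})^2\big)$. Assumption (A): there are $\delta>0$, $M<\infty$ and an integer $N_0$ with $\frac{\Delta_n}{n-1}\le M$ for all $n$ and $\frac{\Delta_n}{n-1}\ge V+\delta$ for all $n\ge N_0$. Drift function: $f(x)=n(\bar\theta-\bar Y)^2+n\big[\big(\frac{\Delta}{n-1}-V\big)-A\big]^2$. *)

theory Defs
  imports "HOL-Probability.Probability"
begin

text \<open>Data: for each sample size n, observations Y n i for i < n (indices 0..n-1).\<close>

definition Ybar :: "(nat \<Rightarrow> nat \<Rightarrow> real) \<Rightarrow> nat \<Rightarrow> real" where
  "Ybar Y n = (\<Sum>i<n. Y n i) / real n"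

definition Delta :: "(nat \<Rightarrow> nat \<Rightarrow> real) \<Rightarrow> nat \<Rightarrow> real" where
  "Delta Y n = (\<Sum>i<n. (Y n i - Ybar Y n)\<^sup>2)"

definition theta_bar :: "nat \<Rightarrow> (nat \<Rightarrow> real) \<Rightarrow> real" where
  "theta_bar n \<theta> = (\<Sum>i<n. \<theta> i) / real n"

definition normal_M :: "real \<Rightarrow> real \<Rightarrow> real measure" where
  "normal_M m v = density lborel (\<lambda>x. ennreal (normal_density m (sqrt v) x))"

definition inv_gamma_density :: "real \<Rightarrow> real \<Rightarrow> real \<Rightarrow> real" where
  "inv_gamma_density \<alpha> \<beta> x =
     (if 0 < x then \<beta> powr \<alpha> / Gamma \<alpha> * x powr (- \<alpha> - 1) * exp (- \<beta> / x) else 0)"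

definition inv_gamma_M :: "real \<Rightarrow> real \<Rightarrow> real measure" where
  "inv_gamma_M \<alpha> \<beta> = density lborel (\<lambda>x. ennreal (inv_gamma_density \<alpha> \<beta> x))"

definition drift_f :: "(nat \<Rightarrow> nat \<Rightarrow> real) \<Rightarrow> real \<Rightarrow> nat \<Rightarrow> real \<Rightarrow> (nat \<Rightarrow> real) \<Rightarrow> real" where
  "drift_f Y V n A \<theta> =
     real n * (theta_bar n \<theta> - Ybar Y n)\<^sup>2
     + real n * ((Delta Y n / (real n - 1) - V) - A)\<^sup>2"

text \<open>E[g(X^(k+1)) | X^(k) = (A, mu, theta)] for nonnegative g, following the Gibbs update order
  mu, then theta (independently), then A.  (The conditional law does not depend on mu.)\<close>
definition gibbs_expect ::
  "(nat \<Rightarrow> nat \<Rightarrow> real) \<Rightarrow> real \<Rightarrow> real \<Rightarrow> real \<Rightarrow> nat \<Rightarrow>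
   (real \<Rightarrow> real \<Rightarrow> (nat \<Rightarrow> real) \<Rightarrow> real) \<Rightarrow> real \<Rightarrow> real \<Rightarrow> (nat \<Rightarrow> real) \<Rightarrow> ennreal" where
  "gibbs_expect Y V a b0 n g A \<mu> \<theta> =
     (\<integral>\<^sup>+ \<mu>'. (\<integral>\<^sup>+ \<theta>'. (\<integral>\<^sup>+ A'. ennreal (g A' \<mu>' \<theta>')
        \<partial>inv_gamma_M (a + (real n - 1) / 2)
                      (b0 + (1/2) * (\<Sum>i<n. (\<theta>' i - theta_bar n \<theta>')\<^sup>2)))
      \<partial>(PiM {..<n} (\<lambda>i. normal_M ((\<mu>' * V + Y n i * A) / (V + A)) (A * V / (V + A)))))
    \<partial>normal_M (theta_bar n \<theta>) (A / real n))"

end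

theory Submission
  imports Defs
begin

text \<open>Normal moments up to order four and
  inverse gamma moments up to order two (the substitution \<open>x = \<beta> / t\<close> turns the latter into Gamma
  integrals) give the expected drift as a quadratic expression in the current state.  With
  \<open>u = A / (V + A)\<close>, the \<open>\<theta>\<close>-part contracts by \<open>(1 - u)\<^sup>2\<close>, and the conditional mean of \<open>A'\<close> is
  \<open>u\<^sup>2 \<Delta>/(n - 1) + u V + O(1/n)\<close>, so the \<open>A\<close>-part contracts by \<open>(1 - u\<^sup>2)\<^sup>2\<close>, the square of
  \<open>(V\<^sup>2 + 2 V A) / (V + A)\<^sup>2\<close>.  The \<open>O(1/n)\<close> errors are bounded uniformly for \<open>n \<ge> 10\<close> once
  \<open>\<Delta>/(n - 1) \<le> M\<close>.\<close>

lemma nn_integral_indicator_UN_incseq: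
  fixes f :: "'a \<Rightarrow> ennreal"
  assumes f: "f \<in> borel_measurable M" and A: "range A \<subseteq> sets M" "incseq A"
  shows "(\<integral>\<^sup>+x. f x * indicator (\<Union>k. A k) x \<partial>M) = (SUP k. \<integral>\<^sup>+x. f x * indicator (A k) x \<partial>M)"
proof -
  have A': "range A \<subseteq> sets (density M f)" using A by simp
  have "(\<Union>k. A k) \<in> sets M" using A by auto
  then have "(\<integral>\<^sup>+x. f x * indicator (\<Union>k. A k) x \<partial>M) = emeasure (density M f) (\<Union>k. A k)"
    using f by (simp add: emeasure_density)
  also have "\<dots> = (SUP k. emeasure (density M f) (A k))"
    using SUP_emeasure_incseq[OF A' A(2)] ..
  also have "\<dots> = (SUP k. \<integral>\<^sup>+x. f x * indicator (A k) x \<partial>M)"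
    using f A by (auto simp: emeasure_density)
  finally show ?thesis .
qed

lemma UN_reciprocal_intervals:
  fixes c :: real
  assumes c: "c > 0"
  shows "(\<Union>k::nat. {c / (real k + 2)..c * (real k + 2)}) = {0<..}"
    and "incseq (\<lambda>k::nat. {c / (real k + 2)..c * (real k + 2)})"
proof -
  have "\<exists>k::nat. c / (real k + 2) \<le> x \<and> x \<le> c * (real k + 2)" if x: "x > 0" for x
  proof -
    obtain k :: nat where k: "real k > x / c + c / x" using reals_Archimedean2 by blast
    have "c \<le> x * (real k + 2)"
      using k x c by (smt (verit) divide_pos_pos mult_pos_pos nonzero_mult_div_cancel_left pos_less_divide_eq)
    moreover have "x \<le> c * (real k + 2)"
      using k x c by (smt (verit) divide_pos_pos pos_divide_less_eq mult.commute)
    ultimately show ?thesis using c by (auto simp: divide_le_eq mult.commute)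
  qed
  moreover have "0 < x" if "c / (real k + 2) \<le> x" for x k
    using that c by (smt (verit) divide_pos_pos of_nat_0_le_iff)
  ultimately show "(\<Union>k::nat. {c / (real k + 2)..c * (real k + 2)}) = {0<..}"
    by auto
  show "incseq (\<lambda>k::nat. {c / (real k + 2)..c * (real k + 2)})"
  proof (intro monoI subsetI)
    fix k k' :: nat and x assume kk: "k \<le> k'" and x: "x \<in> {c / (real k + 2)..c * (real k + 2)}"
    have "c / (real k' + 2) \<le> c / (real k + 2)" using c kk by (intro divide_left_mono) auto
    moreover have "c * (real k + 2) \<le> c * (real k' + 2)" using c kk by simp
    ultimately show "x \<in> {c / (real k' + 2)..c * (real k' + 2)}" using x by auto
  qed
qed

lemma nn_integral_reciprocal_substitution_interval:
  fixes f :: "real \<Rightarrow> real"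
  assumes [measurable]: "f \<in> borel_measurable borel" and \<beta>: "\<beta> > 0" and l: "0 < l" "l \<le> u"
  shows "(\<integral>\<^sup>+x. ennreal (f x) * indicator {\<beta> / u..\<beta> / l} x \<partial>lborel)
       = (\<integral>\<^sup>+t. ennreal (f (\<beta> / t) * (\<beta> / t\<^sup>2)) * indicator {l..u} t \<partial>lborel)"
proof -
  have "(\<integral>\<^sup>+x. ennreal (f x) * indicator {\<beta> / u..\<beta> / l} x \<partial>lborel)
      = (\<integral>\<^sup>+y. ennreal (f (- y)) * indicator {\<beta> / u..\<beta> / l} (- y) \<partial>lborel)"
    by (subst lborel_distr_uminus[symmetric], subst nn_integral_distr) auto
  also have "\<dots> = (\<integral>\<^sup>+y. ennreal (f (- y) * indicator {- \<beta> / l..- \<beta> / u} y) \<partial>lborel)"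
    by (intro nn_integral_cong) (auto split: split_indicator)
  also have "\<dots> = (\<integral>\<^sup>+t. ennreal (f (- (- \<beta> / t)) * (\<beta> / t\<^sup>2) * indicator {l..u} t) \<partial>lborel)"
  proof (rule nn_integral_substitution[where g = "\<lambda>t. - \<beta> / t"])
    show "set_borel_measurable borel {- \<beta> / l..- \<beta> / u} (\<lambda>y. f (- y))"
      unfolding set_borel_measurable_def by measurable
    show "((\<lambda>t. - \<beta> / t) has_real_derivative \<beta> / x\<^sup>2) (at x)" if "x \<in> {l..u}" for x
      using that l by (auto intro!: derivative_eq_intros simp: power2_eq_square)
    show "continuous_on {l..u} (\<lambda>x. \<beta> / x\<^sup>2)"
      using l by (intro continuous_intros) auto
  qed (use \<beta> l in auto)
  also have "\<dots> = (\<integral>\<^sup>+t. ennreal (f (\<beta> / t) * (\<beta> / t\<^sup>2)) * indicator {l..u} t \<partial>lborel)"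
    by (intro nn_integral_cong) (auto split: split_indicator)
  finally show ?thesis .
qed

lemma nn_integral_reciprocal_substitution:
  fixes f :: "real \<Rightarrow> real"
  assumes [measurable]: "f \<in> borel_measurable borel" and \<beta>: "\<beta> > 0"
  shows "(\<integral>\<^sup>+x. ennreal (f x) * indicator {0<..} x \<partial>lborel)
       = (\<integral>\<^sup>+t. ennreal (f (\<beta> / t) * (\<beta> / t\<^sup>2)) * indicator {0<..} t \<partial>lborel)"
proof -
  define J where "J c k = {c / (real k + 2)..c * (real k + 2)}" for c :: real and k :: nat
  have J1: "J 1 k = {1 / (real k + 2)..real k + 2}" for k by (simp add: J_def)
  have "(\<integral>\<^sup>+x. ennreal (f x) * indicator {0<..} x \<partial>lborel)
      = (SUP k. \<integral>\<^sup>+x. ennreal (f x) * indicator (J \<beta> k) x \<partial>lborel)"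
    using UN_reciprocal_intervals[OF \<beta>]
    by (subst nn_integral_indicator_UN_incseq[symmetric]) (auto simp: J_def[abs_def])
  also have "\<dots> = (SUP k. \<integral>\<^sup>+t. ennreal (f (\<beta> / t) * (\<beta> / t\<^sup>2)) * indicator (J 1 k) t \<partial>lborel)"
  proof (intro SUP_cong refl)
    fix k :: nat
    have J\<beta>: "J \<beta> k = {\<beta> / (real k + 2)..\<beta> / (1 / (real k + 2))}" by (simp add: J_def)
    have "1 / (real k + 2) \<le> real k + 2" by (simp add: field_simps)
    then show "(\<integral>\<^sup>+x. ennreal (f x) * indicator (J \<beta> k) x \<partial>lborel)
      = (\<integral>\<^sup>+t. ennreal (f (\<beta> / t) * (\<beta> / t\<^sup>2)) * indicator (J 1 k) t \<partial>lborel)"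
      unfolding J1 J\<beta> by (intro nn_integral_reciprocal_substitution_interval) (use \<beta> in auto)
  qed
  also have "\<dots> = (\<integral>\<^sup>+t. ennreal (f (\<beta> / t) * (\<beta> / t\<^sup>2)) * indicator {0<..} t \<partial>lborel)"
    using UN_reciprocal_intervals[of 1]
    by (subst nn_integral_indicator_UN_incseq[symmetric]) (auto simp: J_def[abs_def])
  finally show ?thesis .
qed

lemma Gamma_real_minus_one:
  fixes \<alpha> :: real
  assumes "\<alpha> > 1"
  shows "Gamma \<alpha> = (\<alpha> - 1) * Gamma (\<alpha> - 1)"
proof -
  have "\<alpha> - 1 \<notin> \<int>\<^sub>\<le>\<^sub>0" using assms nonpos_Ints_nonpos by fastforce
  from Gamma_plus1[OF this] show ?thesis by simp
qed

lemma powr_reciprocal_integrand: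
  fixes \<alpha> \<beta> t :: real and j :: nat
  assumes \<beta>: "\<beta> > 0" and t: "t > 0"
  shows "\<beta> powr \<alpha> * (\<beta> / t) powr (- \<alpha> - 1) * exp (- \<beta> / (\<beta> / t)) * (\<beta> / t) ^ j * (\<beta> / t\<^sup>2)
       = \<beta> ^ j * (t powr (\<alpha> - real j - 1) / exp t)"
proof -
  have e1: "(\<beta> / t) powr (- \<alpha> - 1) = \<beta> powr (- \<alpha> - 1) * t powr (\<alpha> + 1)"
  proof -
    have "t powr (- \<alpha> - 1) = inverse (t powr (\<alpha> + 1))" using powr_minus[of t "\<alpha> + 1"] by simp
    moreover have "(\<beta> / t) powr (- \<alpha> - 1) = \<beta> powr (- \<alpha> - 1) / t powr (- \<alpha> - 1)"
      using t \<beta> by (simp add: powr_divide)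
    ultimately show ?thesis by (simp add: divide_inverse)
  qed
  have e2: "(\<beta> / t) ^ j = \<beta> ^ j / t powr real j"
    using t by (simp add: power_divide powr_realpow)
  have e3: "t powr (\<alpha> + 1) / t powr real j / t\<^sup>2 = t powr (\<alpha> - real j - 1)"
  proof -
    have "t powr (\<alpha> - real j - 1) = t powr ((\<alpha> + 1 - real j) - 2)" by (simp add: algebra_simps)
    also have "\<dots> = t powr (\<alpha> + 1) / t powr real j / t powr 2" by (simp only: powr_diff)
    finally show ?thesis using t by (simp add: powr_realpow)
  qed
  have e4: "\<beta> powr \<alpha> * \<beta> powr (- \<alpha> - 1) * \<beta> = 1"
    using \<beta> by (simp add: powr_add[symmetric])
  have e5: "exp (- \<beta> / (\<beta> / t)) = 1 / exp t"
    using \<beta> t by (simp add: exp_minus field_simps)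
  have "\<beta> powr \<alpha> * (\<beta> / t) powr (- \<alpha> - 1) * exp (- \<beta> / (\<beta> / t)) * (\<beta> / t) ^ j * (\<beta> / t\<^sup>2)
      = (\<beta> powr \<alpha> * \<beta> powr (- \<alpha> - 1) * \<beta>) * \<beta> ^ j * (t powr (\<alpha> + 1) / t powr real j / t\<^sup>2) / exp t"
    unfolding e1 e2 e5 by (simp add: field_simps)
  then show ?thesis unfolding e3 e4 by simp
qed

lemma nn_integral_inv_gamma_power:
  fixes \<alpha> \<beta> :: real and j :: nat
  assumes \<alpha>: "\<alpha> > real j" and \<beta>: "\<beta> > 0"
  shows "(\<integral>\<^sup>+x. ennreal (inv_gamma_density \<alpha> \<beta> x * x ^ j) \<partial>lborel)
       = ennreal (\<beta> ^ j * Gamma (\<alpha> - real j) / Gamma \<alpha>)"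
proof -
  have \<Gamma>: "Gamma \<alpha> > 0" using \<alpha> by (intro Gamma_real_pos) linarith
  define f where "f x = \<beta> powr \<alpha> / Gamma \<alpha> * x powr (- \<alpha> - 1) * exp (- \<beta> / x) * x ^ j" for x :: real
  have [measurable]: "f \<in> borel_measurable borel" unfolding f_def by measurable
  have "f (\<beta> / t) * (\<beta> / t\<^sup>2) = \<beta> ^ j / Gamma \<alpha> * (t powr (\<alpha> - real j - 1) / exp t)"
    if "t > 0" for t
  proof -
    have "f (\<beta> / t) * (\<beta> / t\<^sup>2)
        = \<beta> powr \<alpha> * (\<beta> / t) powr (- \<alpha> - 1) * exp (- \<beta> / (\<beta> / t)) * (\<beta> / t) ^ j * (\<beta> / t\<^sup>2)
          / Gamma \<alpha>"
      by (simp add: f_def)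
    then show ?thesis unfolding powr_reciprocal_integrand[OF \<beta> that] by simp
  qed
  then have subst: "ennreal (f (\<beta> / t) * (\<beta> / t\<^sup>2)) * indicator {0<..} t
      = ennreal (\<beta> ^ j / Gamma \<alpha>) * ennreal (indicator {0..} t * t powr (\<alpha> - real j - 1) / exp t)" for t
    using \<beta> \<Gamma> by (auto simp: indicator_def ennreal_mult[symmetric])
  have "(\<integral>\<^sup>+x. ennreal (inv_gamma_density \<alpha> \<beta> x * x ^ j) \<partial>lborel)
      = (\<integral>\<^sup>+x. ennreal (f x) * indicator {0<..} x \<partial>lborel)"
    by (intro nn_integral_cong) (simp add: f_def inv_gamma_density_def indicator_def)
  also have "\<dots> = (\<integral>\<^sup>+t. ennreal (f (\<beta> / t) * (\<beta> / t\<^sup>2)) * indicator {0<..} t \<partial>lborel)"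
    by (rule nn_integral_reciprocal_substitution) (use \<beta> in auto)
  also have "\<dots> = ennreal (\<beta> ^ j / Gamma \<alpha>)
      * (\<integral>\<^sup>+t. ennreal (indicator {0..} t * t powr (\<alpha> - real j - 1) / exp t) \<partial>lborel)"
    unfolding subst by (rule nn_integral_cmult) measurable
  also have "\<dots> = ennreal (\<beta> ^ j / Gamma \<alpha>) * ennreal (Gamma (\<alpha> - real j))"
    using \<alpha> by (subst Gamma_conv_nn_integral_real) auto
  also have "\<dots> = ennreal (\<beta> ^ j * Gamma (\<alpha> - real j) / Gamma \<alpha>)"
    using \<beta> \<Gamma> \<alpha> by (subst ennreal_mult[symmetric]) auto
  finally show ?thesis .
qed

lemma has_bochner_integral_inv_gamma_power:
  fixes \<alpha> \<beta> :: real and j :: nat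
  assumes \<alpha>: "\<alpha> > real j" and \<beta>: "\<beta> > 0"
  shows "has_bochner_integral lborel (\<lambda>x. inv_gamma_density \<alpha> \<beta> x * x ^ j)
           (\<beta> ^ j * Gamma (\<alpha> - real j) / Gamma \<alpha>)"
proof (rule has_bochner_integral_nn_integral)
  show "(\<lambda>x. inv_gamma_density \<alpha> \<beta> x * x ^ j) \<in> borel_measurable lborel"
    unfolding inv_gamma_density_def by measurable
  show "AE x in lborel. 0 \<le> inv_gamma_density \<alpha> \<beta> x * x ^ j"
    using \<alpha> \<beta> by (intro AE_I2) (auto simp: inv_gamma_density_def)
qed (use \<alpha> \<beta> nn_integral_inv_gamma_power[OF \<alpha> \<beta>] in auto)

lemma nn_integral_inv_gamma_quadratic:
  assumes \<alpha>: "\<alpha> > 2" and \<beta>: "\<beta> > 0" and "P \<ge> 0" "w \<ge> 0"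
  shows "(\<integral>\<^sup>+x. ennreal (P + w * (c - x)\<^sup>2) \<partial>inv_gamma_M \<alpha> \<beta>)
       = ennreal (P + w * (c\<^sup>2 - 2 * c * (\<beta> / (\<alpha> - 1)) + \<beta>\<^sup>2 / ((\<alpha> - 1) * (\<alpha> - 2))))"
proof -
  have \<Gamma>: "Gamma \<alpha> = (\<alpha> - 1) * Gamma (\<alpha> - 1)" "Gamma (\<alpha> - 1) = (\<alpha> - 2) * Gamma (\<alpha> - 2)"
    using \<alpha> Gamma_real_minus_one[of \<alpha>] Gamma_real_minus_one[of "\<alpha> - 1"] by auto
  have pos: "Gamma \<alpha> > 0" "Gamma (\<alpha> - 1) > 0" "Gamma (\<alpha> - 2) > 0"
    using \<alpha> by (auto intro!: Gamma_real_pos)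
  have v1: "\<beta> * Gamma (\<alpha> - 1) / Gamma \<alpha> = \<beta> / (\<alpha> - 1)"
    unfolding \<Gamma>(1) using pos by simp
  have v2: "\<beta>\<^sup>2 * Gamma (\<alpha> - 2) / Gamma \<alpha> = \<beta>\<^sup>2 / ((\<alpha> - 1) * (\<alpha> - 2))"
    unfolding \<Gamma>(1) \<Gamma>(2) using pos by simp
  have m: "has_bochner_integral lborel (\<lambda>x. inv_gamma_density \<alpha> \<beta> x * x ^ 0) 1"
    "has_bochner_integral lborel (\<lambda>x. inv_gamma_density \<alpha> \<beta> x * x ^ 1) (\<beta> / (\<alpha> - 1))"
    "has_bochner_integral lborel (\<lambda>x. inv_gamma_density \<alpha> \<beta> x * x ^ 2) (\<beta>\<^sup>2 / ((\<alpha> - 1) * (\<alpha> - 2)))"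
    using has_bochner_integral_inv_gamma_power[of 0 \<alpha> \<beta>] has_bochner_integral_inv_gamma_power[of 1 \<alpha> \<beta>]
      has_bochner_integral_inv_gamma_power[of 2 \<alpha> \<beta>] \<alpha> \<beta> pos(1) v1 v2
    by simp_all
  have "has_bochner_integral lborel
      (\<lambda>x. inv_gamma_density \<alpha> \<beta> x * x ^ 0 * (P + w * c\<^sup>2) + inv_gamma_density \<alpha> \<beta> x * x ^ 1 * (- 2 * w * c)
         + inv_gamma_density \<alpha> \<beta> x * x ^ 2 * w)
      (1 * (P + w * c\<^sup>2) + \<beta> / (\<alpha> - 1) * (- 2 * w * c) + \<beta>\<^sup>2 / ((\<alpha> - 1) * (\<alpha> - 2)) * w)"
    by (intro has_bochner_integral_add has_bochner_integral_mult_left m)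
  then have hb: "has_bochner_integral lborel (\<lambda>x. inv_gamma_density \<alpha> \<beta> x * (P + w * (c - x)\<^sup>2))
      (P + w * (c\<^sup>2 - 2 * c * (\<beta> / (\<alpha> - 1)) + \<beta>\<^sup>2 / ((\<alpha> - 1) * (\<alpha> - 2))))"
    by (simp add: power2_eq_square algebra_simps)
  have nn: "0 \<le> inv_gamma_density \<alpha> \<beta> x" for x
    using \<alpha> \<beta> by (auto simp: inv_gamma_density_def)
  have "(\<integral>\<^sup>+x. ennreal (P + w * (c - x)\<^sup>2) \<partial>inv_gamma_M \<alpha> \<beta>)
      = (\<integral>\<^sup>+x. ennreal (inv_gamma_density \<alpha> \<beta> x * (P + w * (c - x)\<^sup>2)) \<partial>lborel)"
    unfolding inv_gamma_M_def using nn assms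
    by (subst nn_integral_density) (auto simp: inv_gamma_density_def ennreal_mult)
  also have "\<dots> = ennreal (P + w * (c\<^sup>2 - 2 * c * (\<beta> / (\<alpha> - 1)) + \<beta>\<^sup>2 / ((\<alpha> - 1) * (\<alpha> - 2))))"
    using hb nn assms by (subst nn_integral_eq_integral) (auto simp: has_bochner_integral_iff)
  finally show ?thesis .
qed

lemma finite_product_prob_spaceI:
  assumes "\<And>i. prob_space (M i)" and "finite I"
  shows "finite_product_prob_space M I"
  using assms prob_space_imp_sigma_finite
  by (auto simp: finite_product_prob_space_def finite_product_sigma_finite_def
      finite_product_sigma_finite_axioms_def product_prob_space_def product_prob_space_axioms_def
      product_sigma_finite_def)

context finite_product_prob_space
begin

lemma integral_PiM_component:
  fixes g :: "_ \<Rightarrow> real"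
  assumes i: "i \<in> I" and g: "integrable (M i) g"
  shows "integrable (Pi\<^sub>M I M) (\<lambda>x. g (x i))" and "(\<integral>x. g (x i) \<partial>Pi\<^sub>M I M) = integral\<^sup>L (M i) g"
proof -
  have [measurable]: "g \<in> borel_measurable (M i)" using g by auto
  have proj: "(\<lambda>x. x i) \<in> measurable (Pi\<^sub>M I M) (M i)" using i by measurable
  show "integrable (Pi\<^sub>M I M) (\<lambda>x. g (x i))"
    using g integrable_distr_eq[OF proj, of g] unfolding PiM_component[OF i] by simp
  show "(\<integral>x. g (x i) \<partial>Pi\<^sub>M I M) = integral\<^sup>L (M i) g"
    using integral_distr[OF proj, of g] unfolding PiM_component[OF i] by simp
qed

lemma integral_PiM_two_components:
  fixes g h :: "_ \<Rightarrow> real"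
  assumes i: "i \<in> I" and j: "j \<in> I" and ij: "i \<noteq> j"
    and g: "integrable (M i) g" and h: "integrable (M j) h"
  shows "integrable (Pi\<^sub>M I M) (\<lambda>x. g (x i) * h (x j))"
    and "(\<integral>x. g (x i) * h (x j) \<partial>Pi\<^sub>M I M) = integral\<^sup>L (M i) g * integral\<^sup>L (M j) h"
proof -
  define f where "f k = (if k = i then g else if k = j then h else (\<lambda>_. 1))" for k
  have int: "integrable (M k) (f k)" for k
    using g h by (auto simp: f_def)
  have split: "(\<Prod>k\<in>I. F k) = F i * F j * (\<Prod>k\<in>I - {i} - {j}. F k)" for F :: "_ \<Rightarrow> real"
    using i j ij finite_index by (simp add: prod.remove[of I i] prod.remove[of "I - {i}" j] mult.assoc)
  have "(\<Prod>k\<in>I. f k (x k)) = g (x i) * h (x j)" for x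
    unfolding split[of "\<lambda>k. f k (x k)"] using ij by (simp add: f_def prod.neutral)
  moreover have "(\<Prod>k\<in>I. integral\<^sup>L (M k) (f k)) = integral\<^sup>L (M i) g * integral\<^sup>L (M j) h"
    unfolding split[of "\<lambda>k. integral\<^sup>L (M k) (f k)"] using ij by (simp add: f_def prod.neutral M.prob_space)
  ultimately show "integrable (Pi\<^sub>M I M) (\<lambda>x. g (x i) * h (x j))"
    and "(\<integral>x. g (x i) * h (x j) \<partial>Pi\<^sub>M I M) = integral\<^sup>L (M i) g * integral\<^sup>L (M j) h"
    using product_integrable_prod[OF finite_index int] product_integral_prod[OF finite_index int] by simp_all
qed

lemma integral_PiM_sum:
  fixes g :: "_ \<Rightarrow> _ \<Rightarrow> real"
  assumes g: "\<And>i. i \<in> I \<Longrightarrow> integrable (M i) (g i)"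
  shows "integrable (Pi\<^sub>M I M) (\<lambda>x. \<Sum>i\<in>I. g i (x i))"
    and "(\<integral>x. (\<Sum>i\<in>I. g i (x i)) \<partial>Pi\<^sub>M I M) = (\<Sum>i\<in>I. integral\<^sup>L (M i) (g i))"
  using g integral_PiM_component by (auto intro!: sum.cong)

lemma integral_PiM_sum_squared:
  fixes g :: "_ \<Rightarrow> _ \<Rightarrow> real"
  assumes g: "\<And>i. i \<in> I \<Longrightarrow> integrable (M i) (g i)"
    and g2: "\<And>i. i \<in> I \<Longrightarrow> integrable (M i) (\<lambda>t. (g i t)\<^sup>2)"
  shows "integrable (Pi\<^sub>M I M) (\<lambda>x. (\<Sum>i\<in>I. g i (x i))\<^sup>2)"
    and "(\<integral>x. (\<Sum>i\<in>I. g i (x i))\<^sup>2 \<partial>Pi\<^sub>M I M) =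
       (\<Sum>i\<in>I. integral\<^sup>L (M i) (g i))\<^sup>2
       + (\<Sum>i\<in>I. integral\<^sup>L (M i) (\<lambda>t. (g i t)\<^sup>2) - (integral\<^sup>L (M i) (g i))\<^sup>2)"
proof -
  define \<mu> where "\<mu> i = integral\<^sup>L (M i) (g i)" for i
  define s where "s i = integral\<^sup>L (M i) (\<lambda>t. (g i t)\<^sup>2)" for i
  have sq: "(\<Sum>i\<in>I. g i (x i))\<^sup>2 = (\<Sum>i\<in>I. \<Sum>j\<in>I. g i (x i) * g j (x j))" for x
    by (simp add: power2_eq_square sum_product)
  have ij: "integrable (Pi\<^sub>M I M) (\<lambda>x. g i (x i) * g j (x j))
      \<and> (\<integral>x. g i (x i) * g j (x j) \<partial>Pi\<^sub>M I M) = (if i = j then s i else \<mu> i * \<mu> j)"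
    if "i \<in> I" "j \<in> I" for i j
  proof (cases "i = j")
    case True
    then show ?thesis
      using integral_PiM_component[OF that(1) g2[OF that(1)]] by (simp add: s_def power2_eq_square)
  next
    case False
    then show ?thesis
      using integral_PiM_two_components[OF that False g[OF that(1)] g[OF that(2)]] by (simp add: \<mu>_def)
  qed
  show "integrable (Pi\<^sub>M I M) (\<lambda>x. (\<Sum>i\<in>I. g i (x i))\<^sup>2)"
    unfolding sq using ij by auto
  have "(\<integral>x. (\<Sum>i\<in>I. g i (x i))\<^sup>2 \<partial>Pi\<^sub>M I M) = (\<Sum>i\<in>I. \<Sum>j\<in>I. if i = j then s i else \<mu> i * \<mu> j)"
    unfolding sq using ij by (simp add: Bochner_Integration.integral_sum)
  also have "\<dots> = (\<Sum>i\<in>I. \<Sum>j\<in>I. \<mu> i * \<mu> j + (if i = j then s i - (\<mu> i)\<^sup>2 else 0))"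
    by (intro sum.cong refl) (auto simp: power2_eq_square)
  also have "\<dots> = (\<Sum>i\<in>I. \<mu> i)\<^sup>2 + (\<Sum>i\<in>I. s i - (\<mu> i)\<^sup>2)"
    using finite_index by (simp add: sum.distrib power2_eq_square sum_product)
  finally show "(\<integral>x. (\<Sum>i\<in>I. g i (x i))\<^sup>2 \<partial>Pi\<^sub>M I M) =
       (\<Sum>i\<in>I. integral\<^sup>L (M i) (g i))\<^sup>2
       + (\<Sum>i\<in>I. integral\<^sup>L (M i) (\<lambda>t. (g i t)\<^sup>2) - (integral\<^sup>L (M i) (g i))\<^sup>2)"
    by (simp add: \<mu>_def s_def)
qed

end

lemma prob_space_normal_M: "v > 0 \<Longrightarrow> prob_space (normal_M m v)"
  unfolding normal_M_def by (rule prob_space_normal_density) simp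

lemma integral_normal_M_quartic:
  assumes v: "v > 0"
    and f: "\<And>x. f x = cA + cB * (x - m) + cC * (x - m)^2 + cD * (x - m)^3 + cE * (x - m)^4"
  shows "integrable (normal_M m v) f" and "integral\<^sup>L (normal_M m v) f = cA + cC * v + cE * (3 * v\<^sup>2)"
proof -
  let ?\<phi> = "normal_density m (sqrt v)"
  have s: "sqrt v > 0" using v by simp
  have m0: "has_bochner_integral lborel (\<lambda>x. ?\<phi> x * (x - m)^0) 1"
    using normal_moment_even[where \<sigma>="sqrt v" and \<mu>=m and k=0] s by simp
  have m1: "has_bochner_integral lborel (\<lambda>x. ?\<phi> x * (x - m)^1) 0"
    using normal_moment_odd[where \<sigma>="sqrt v" and \<mu>=m and k=0] s by simp
  have m2: "has_bochner_integral lborel (\<lambda>x. ?\<phi> x * (x - m)^2) v"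
    using normal_moment_even[where \<sigma>="sqrt v" and \<mu>=m and k=1] s v by simp
  have m3: "has_bochner_integral lborel (\<lambda>x. ?\<phi> x * (x - m)^3) 0"
    using normal_moment_odd[where \<sigma>="sqrt v" and \<mu>=m and k=1] s by (simp add: numeral_3_eq_3)
  have m4: "has_bochner_integral lborel (\<lambda>x. ?\<phi> x * (x - m)^4) (3 * v\<^sup>2)"
  proof -
    have "fact (2 * 2) / ((2 / (sqrt v)\<^sup>2) ^ 2 * fact 2) = (3 * v\<^sup>2 :: real)"
      using v by (simp add: fact_numeral power2_eq_square field_simps)
    then show ?thesis
      using normal_moment_even[where \<sigma>="sqrt v" and \<mu>=m and k=2] s by (simp add: mult_2)
  qed
  have "has_bochner_integral lborel (\<lambda>x. ?\<phi> x * (x - m)^0 * cA + ?\<phi> x * (x - m)^1 * cB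
      + ?\<phi> x * (x - m)^2 * cC + ?\<phi> x * (x - m)^3 * cD + ?\<phi> x * (x - m)^4 * cE)
      (1 * cA + 0 * cB + v * cC + 0 * cD + 3 * v\<^sup>2 * cE)"
    by (intro has_bochner_integral_add has_bochner_integral_mult_left m0 m1 m2 m3 m4)
  then have "has_bochner_integral lborel (\<lambda>x. ?\<phi> x * f x) (cA + cC * v + cE * (3 * v\<^sup>2))"
    unfolding f by (simp add: algebra_simps)
  moreover have "f \<in> borel_measurable borel"
    unfolding f[abs_def] by measurable
  ultimately have "has_bochner_integral (normal_M m v) f (cA + cC * v + cE * (3 * v\<^sup>2))"
    unfolding normal_M_def by (intro has_bochner_integral_density) auto
  then show "integrable (normal_M m v) f" and "integral\<^sup>L (normal_M m v) f = cA + cC * v + cE * (3 * v\<^sup>2)"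
    by (auto simp: has_bochner_integral_iff)
qed

lemma PiM_normal_moments:
  fixes m :: "'i \<Rightarrow> real" and I :: "'i set"
  assumes v: "v > 0" and I: "finite I"
  defines "P \<equiv> Pi\<^sub>M I (\<lambda>i. normal_M (m i) v)"
  shows "has_bochner_integral P (\<lambda>x. \<Sum>i\<in>I. x i - m i) 0"
    and "has_bochner_integral P (\<lambda>x. (\<Sum>i\<in>I. x i - m i)\<^sup>2) (real (card I) * v)"
    and "has_bochner_integral P (\<lambda>x. \<Sum>i\<in>I. (x i - c)\<^sup>2) (\<Sum>i\<in>I. (m i - c)\<^sup>2 + v)"
    and "has_bochner_integral P (\<lambda>x. (\<Sum>i\<in>I. (x i - c)\<^sup>2)\<^sup>2)
           ((\<Sum>i\<in>I. (m i - c)\<^sup>2 + v)\<^sup>2 + (\<Sum>i\<in>I. 4 * (m i - c)\<^sup>2 * v + 2 * v\<^sup>2))"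
proof -
  interpret finite_product_prob_space "\<lambda>i. normal_M (m i) v" I
    using prob_space_normal_M[OF v] I by (intro finite_product_prob_spaceI)
  note quartic = integral_normal_M_quartic[OF v]
  have Z: "integrable (normal_M (m i) v) (\<lambda>t. t - m i)"
    "integral\<^sup>L (normal_M (m i) v) (\<lambda>t. t - m i) = 0" for i
    using quartic[where f="\<lambda>t. t - m i" and cA=0 and cB=1 and cC=0 and cD=0 and cE=0] by simp_all
  have Z2: "integrable (normal_M (m i) v) (\<lambda>t. (t - m i)\<^sup>2)"
    "integral\<^sup>L (normal_M (m i) v) (\<lambda>t. (t - m i)\<^sup>2) = v" for i
    using quartic[where f="\<lambda>t. (t - m i)\<^sup>2" and cA=0 and cB=0 and cC=1 and cD=0 and cE=0] by simp_all
  have T: "integrable (normal_M (m i) v) (\<lambda>t. (t - c)\<^sup>2)"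
    "integral\<^sup>L (normal_M (m i) v) (\<lambda>t. (t - c)\<^sup>2) = (m i - c)\<^sup>2 + v" for i
    using quartic[where f="\<lambda>t. (t - c)\<^sup>2" and cA="(m i - c)\<^sup>2" and cB="2 * (m i - c)"
        and cC=1 and cD=0 and cE=0]
    by (simp_all add: power2_eq_square algebra_simps)
  have T2: "integrable (normal_M (m i) v) (\<lambda>t. ((t - c)\<^sup>2)\<^sup>2)"
    "integral\<^sup>L (normal_M (m i) v) (\<lambda>t. ((t - c)\<^sup>2)\<^sup>2) = (m i - c)^4 + 6 * (m i - c)\<^sup>2 * v + 3 * v\<^sup>2" for i
    using quartic[where f="\<lambda>t. ((t - c)\<^sup>2)\<^sup>2" and cA="(m i - c)^4" and cB="4 * (m i - c)^3"
        and cC="6 * (m i - c)\<^sup>2" and cD="4 * (m i - c)" and cE=1]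
    by (simp_all add: power2_eq_square power3_eq_cube power4_eq_xxxx algebra_simps)
  have var: "(\<Sum>i\<in>I. ((m i - c)^4 + 6 * (m i - c)\<^sup>2 * v + 3 * v\<^sup>2) - ((m i - c)\<^sup>2 + v)\<^sup>2)
      = (\<Sum>i\<in>I. 4 * (m i - c)\<^sup>2 * v + 2 * v\<^sup>2)"
    by (intro sum.cong refl) (simp add: power2_eq_square power4_eq_xxxx algebra_simps)
  show "has_bochner_integral P (\<lambda>x. \<Sum>i\<in>I. x i - m i) 0"
    using integral_PiM_sum[of "\<lambda>i t. t - m i"] Z by (simp add: P_def has_bochner_integral_iff)
  show "has_bochner_integral P (\<lambda>x. (\<Sum>i\<in>I. x i - m i)\<^sup>2) (real (card I) * v)"
    using integral_PiM_sum_squared[of "\<lambda>i t. t - m i"] Z Z2 by (simp add: P_def has_bochner_integral_iff)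
  show "has_bochner_integral P (\<lambda>x. \<Sum>i\<in>I. (x i - c)\<^sup>2) (\<Sum>i\<in>I. (m i - c)\<^sup>2 + v)"
    using integral_PiM_sum[of "\<lambda>i t. (t - c)\<^sup>2"] T by (simp add: P_def has_bochner_integral_iff)
  show "has_bochner_integral P (\<lambda>x. (\<Sum>i\<in>I. (x i - c)\<^sup>2)\<^sup>2)
           ((\<Sum>i\<in>I. (m i - c)\<^sup>2 + v)\<^sup>2 + (\<Sum>i\<in>I. 4 * (m i - c)\<^sup>2 * v + 2 * v\<^sup>2))"
    using integral_PiM_sum_squared[of "\<lambda>i t. (t - c)\<^sup>2"] T T2 var
    by (simp add: P_def has_bochner_integral_iff)
qed

lemma has_bochner_integral_PiM_normal_quadratic:
  fixes m :: "'i \<Rightarrow> real" and I :: "'i set" and v c a0 aZ2 aZ aT aT2 :: real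
  assumes v: "v > 0" and I: "finite I"
  defines "Z \<equiv> \<lambda>x. \<Sum>i\<in>I. x i - m i" and "T \<equiv> \<lambda>x. \<Sum>i\<in>I. (x i - c)\<^sup>2"
  shows "has_bochner_integral (Pi\<^sub>M I (\<lambda>i. normal_M (m i) v))
           (\<lambda>x. a0 + (Z x)\<^sup>2 * aZ2 + Z x * aZ + T x * aT + (T x)\<^sup>2 * aT2)
           (a0 + real (card I) * v * aZ2 + (\<Sum>i\<in>I. (m i - c)\<^sup>2 + v) * aT
            + ((\<Sum>i\<in>I. (m i - c)\<^sup>2 + v)\<^sup>2 + (\<Sum>i\<in>I. 4 * (m i - c)\<^sup>2 * v + 2 * v\<^sup>2)) * aT2)"
proof -
  interpret prob_space "Pi\<^sub>M I (\<lambda>i. normal_M (m i) v)"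
    using prob_space_normal_M[OF v] by (intro prob_space_PiM)
  have "has_bochner_integral (Pi\<^sub>M I (\<lambda>i. normal_M (m i) v)) (\<lambda>x. a0) a0"
    by (simp add: has_bochner_integral_iff prob_space)
  then have "has_bochner_integral (Pi\<^sub>M I (\<lambda>i. normal_M (m i) v))
      (\<lambda>x. a0 + (Z x)\<^sup>2 * aZ2 + Z x * aZ + T x * aT + (T x)\<^sup>2 * aT2)
      (a0 + real (card I) * v * aZ2 + 0 * aZ + (\<Sum>i\<in>I. (m i - c)\<^sup>2 + v) * aT
       + ((\<Sum>i\<in>I. (m i - c)\<^sup>2 + v)\<^sup>2 + (\<Sum>i\<in>I. 4 * (m i - c)\<^sup>2 * v + 2 * v\<^sup>2)) * aT2)"
    unfolding Z_def T_def using PiM_normal_moments[OF v I]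
    by (intro has_bochner_integral_add has_bochner_integral_mult_left)
  then show ?thesis by simp
qed

lemma theta_bar_sum_sq_dev:
  fixes \<theta> m :: "nat \<Rightarrow> real"
  assumes n: "n > 0"
  defines "mb \<equiv> (\<Sum>i<n. m i) / real n"
  shows "theta_bar n \<theta> = (\<Sum>i<n. \<theta> i - m i) / real n + mb"
    and "(\<Sum>i<n. (\<theta> i - theta_bar n \<theta>)\<^sup>2) = (\<Sum>i<n. (\<theta> i - mb)\<^sup>2) - (\<Sum>i<n. \<theta> i - m i)\<^sup>2 / real n"
proof -
  define Z where "Z = (\<Sum>i<n. \<theta> i - m i)"
  have sum\<theta>: "(\<Sum>i<n. \<theta> i) = Z + real n * mb"
    using n by (simp add: Z_def mb_def sum_subtractf)
  show \<theta>b: "theta_bar n \<theta> = (\<Sum>i<n. \<theta> i - m i) / real n + mb"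
    using n by (simp add: theta_bar_def sum\<theta> Z_def[symmetric] field_simps)
  have "(\<Sum>i<n. (\<theta> i - theta_bar n \<theta>)\<^sup>2)
      = (\<Sum>i<n. (\<theta> i - mb)\<^sup>2) - 2 * (Z / real n) * (\<Sum>i<n. \<theta> i - mb) + real n * (Z / real n)\<^sup>2"
    unfolding \<theta>b Z_def[symmetric]
    by (simp add: power2_eq_square algebra_simps sum.distrib sum_subtractf sum_distrib_left
        sum_divide_distrib)
  also have "(\<Sum>i<n. \<theta> i - mb) = Z" by (simp add: sum_subtractf sum\<theta>)
  finally show "(\<Sum>i<n. (\<theta> i - theta_bar n \<theta>)\<^sup>2) = (\<Sum>i<n. (\<theta> i - mb)\<^sup>2) - (\<Sum>i<n. \<theta> i - m i)\<^sup>2 / real n"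
    using n by (simp add: Z_def power2_eq_square field_simps)
qed

text \<open>Only the linear term of the inverse gamma moments needs the exact scale \<open>b0 + S/2\<close>; in the
  quadratic term it is replaced by the larger \<open>b0 + T/2\<close>, which is a simpler function of \<open>\<theta>\<close>.\<close>
lemma nn_integral_inv_gamma_quadratic_le:
  fixes S T c :: real
  assumes \<alpha>: "\<alpha> > 2" and b0: "b0 > 0" and S: "0 \<le> S" "S \<le> T" and "P \<ge> 0" "w \<ge> 0"
  defines "H \<equiv> P + w * (c\<^sup>2 - 2 * c * ((b0 + S / 2) / (\<alpha> - 1)) + (b0 + T / 2)\<^sup>2 / ((\<alpha> - 1) * (\<alpha> - 2)))"
  shows "(\<integral>\<^sup>+x. ennreal (P + w * (c - x)\<^sup>2) \<partial>inv_gamma_M \<alpha> (b0 + S / 2)) \<le> ennreal H"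
    and "H \<ge> 0"
proof -
  define \<beta> where "\<beta> = b0 + S / 2"
  have \<beta>: "0 < \<beta>" "\<beta> \<le> b0 + T / 2" using b0 S by (auto simp: \<beta>_def)
  have d: "(\<alpha> - 1) * (\<alpha> - 2) > 0" "(\<alpha> - 1) * (\<alpha> - 2) \<le> (\<alpha> - 1)\<^sup>2"
    using \<alpha> by (auto simp: power2_eq_square intro!: mult_pos_pos)
  have "\<beta>\<^sup>2 / ((\<alpha> - 1) * (\<alpha> - 2)) \<le> (b0 + T / 2)\<^sup>2 / ((\<alpha> - 1) * (\<alpha> - 2))"
    using \<beta> d by (intro divide_right_mono power_mono) auto
  then have le: "P + w * (c\<^sup>2 - 2 * c * (\<beta> / (\<alpha> - 1)) + \<beta>\<^sup>2 / ((\<alpha> - 1) * (\<alpha> - 2))) \<le> H"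
    using assms by (simp add: H_def \<beta>_def mult_left_mono)
  show "(\<integral>\<^sup>+x. ennreal (P + w * (c - x)\<^sup>2) \<partial>inv_gamma_M \<alpha> (b0 + S / 2)) \<le> ennreal H"
    using nn_integral_inv_gamma_quadratic[OF \<alpha> \<beta>(1) assms(5,6), of c] le
    by (simp add: \<beta>_def ennreal_leI)
  have "\<beta>\<^sup>2 / (\<alpha> - 1)\<^sup>2 \<le> \<beta>\<^sup>2 / ((\<alpha> - 1) * (\<alpha> - 2))"
    using d by (intro divide_left_mono) (auto intro!: mult_pos_pos)
  moreover have "c\<^sup>2 - 2 * c * (\<beta> / (\<alpha> - 1)) + \<beta>\<^sup>2 / (\<alpha> - 1)\<^sup>2 = (c - \<beta> / (\<alpha> - 1))\<^sup>2"
    by (simp add: power2_diff power_divide algebra_simps)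
  ultimately have "0 \<le> c\<^sup>2 - 2 * c * (\<beta> / (\<alpha> - 1)) + \<beta>\<^sup>2 / ((\<alpha> - 1) * (\<alpha> - 2))"
    by (smt (verit) zero_le_power2)
  then show "H \<ge> 0" using le assms by (smt (verit) mult_nonneg_nonneg)
qed

lemma nn_integral_theta_A_update_le:
  fixes n :: nat and m :: "nat \<Rightarrow> real" and v \<alpha> b0 c Yb :: real
  assumes v: "v > 0" and n: "n > 0" and \<alpha>: "\<alpha> > 2" and b0: "b0 > 0"
  defines "mb \<equiv> (\<Sum>i<n. m i) / real n"
  defines "SA \<equiv> (\<Sum>i<n. (m i - mb)\<^sup>2)"
  defines "ET \<equiv> SA + real n * v"
  defines "ET2 \<equiv> ET\<^sup>2 + (\<Sum>i<n. 4 * (m i - mb)\<^sup>2 * v + 2 * v\<^sup>2)"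
  shows "(\<integral>\<^sup>+\<theta>. (\<integral>\<^sup>+A'. ennreal (real n * (theta_bar n \<theta> - Yb)\<^sup>2 + real n * (c - A')\<^sup>2)
            \<partial>inv_gamma_M \<alpha> (b0 + (1/2) * (\<Sum>i<n. (\<theta> i - theta_bar n \<theta>)\<^sup>2)))
          \<partial>Pi\<^sub>M {..<n} (\<lambda>i. normal_M (m i) v))
     \<le> ennreal (v + real n * (mb - Yb)\<^sup>2 + real n * c\<^sup>2
           - 2 * real n * c * (b0 + (SA + (real n - 1) * v) / 2) / (\<alpha> - 1)
           + real n * (b0\<^sup>2 + b0 * ET + ET2 / 4) / ((\<alpha> - 1) * (\<alpha> - 2)))"
proof -
  define P where "P = Pi\<^sub>M {..<n} (\<lambda>i. normal_M (m i) v)"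
  define Z where "Z x = (\<Sum>i<n. x i - m i)" for x :: "nat \<Rightarrow> real"
  define T where "T x = (\<Sum>i<n. (x i - mb)\<^sup>2)" for x :: "nat \<Rightarrow> real"
  define k where "k = \<alpha> - 1"
  define d where "d = (\<alpha> - 1) * (\<alpha> - 2)"
  have k: "k > 1" and d: "d > 0" using \<alpha> by (auto simp: k_def d_def intro!: mult_pos_pos)
  have nr: "real n > 0" using n by simp
  note \<theta>_decomp = theta_bar_sum_sq_dev[OF n, of _ m, folded mb_def]
  define H where "H x = real n * (theta_bar n x - Yb)\<^sup>2
      + real n * (c\<^sup>2 - 2 * c * ((b0 + (T x - (Z x)\<^sup>2 / real n) / 2) / k) + (b0 + T x / 2)\<^sup>2 / d)" for x
  have inner: "(\<integral>\<^sup>+A'. ennreal (real n * (theta_bar n x - Yb)\<^sup>2 + real n * (c - A')\<^sup>2)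
      \<partial>inv_gamma_M \<alpha> (b0 + (1/2) * (\<Sum>i<n. (x i - theta_bar n x)\<^sup>2))) \<le> ennreal (H x)"
    and H_nonneg: "H x \<ge> 0" for x
  proof -
    have S: "(\<Sum>i<n. (x i - theta_bar n x)\<^sup>2) = T x - (Z x)\<^sup>2 / real n"
      unfolding T_def Z_def by (rule \<theta>_decomp(2))
    have S0: "0 \<le> T x - (Z x)\<^sup>2 / real n" unfolding S[symmetric] by (intro sum_nonneg) auto
    have ST: "T x - (Z x)\<^sup>2 / real n \<le> T x" using nr by simp
    note le = nn_integral_inv_gamma_quadratic_le[OF \<alpha> b0 S0 ST, of "real n * (theta_bar n x - Yb)\<^sup>2" "real n" c]
    show "(\<integral>\<^sup>+A'. ennreal (real n * (theta_bar n x - Yb)\<^sup>2 + real n * (c - A')\<^sup>2)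
        \<partial>inv_gamma_M \<alpha> (b0 + (1/2) * (\<Sum>i<n. (x i - theta_bar n x)\<^sup>2))) \<le> ennreal (H x)"
      using le(1) by (simp add: S H_def k_def d_def)
    show "H x \<ge> 0"
      using le(2) by (simp add: H_def k_def d_def)
  qed
  define a0 where "a0 = real n * (mb - Yb)\<^sup>2 + real n * c\<^sup>2 - 2 * real n * c * b0 / k + real n * b0\<^sup>2 / d"
  define aZ2 where "aZ2 = 1 / real n + c / k"
  define aZ where "aZ = 2 * (mb - Yb)"
  define aT where "aT = - real n * c / k + real n * b0 / d"
  define aT2 where "aT2 = real n / (4 * d)"
  have H_poly: "H = (\<lambda>x. a0 + (Z x)\<^sup>2 * aZ2 + Z x * aZ + T x * aT + (T x)\<^sup>2 * aT2)"
  proof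
    fix x
    have \<theta>b: "theta_bar n x = Z x / real n + mb"
      unfolding Z_def by (rule \<theta>_decomp(1))
    show "H x = a0 + (Z x)\<^sup>2 * aZ2 + Z x * aZ + T x * aT + (T x)\<^sup>2 * aT2"
      unfolding H_def \<theta>b a0_def aZ2_def aZ_def aT_def aT2_def using nr k d
      by (simp add: power2_eq_square field_simps)
  qed
  have "(\<Sum>i<n. (m i - mb)\<^sup>2 + v) = ET" by (simp add: ET_def SA_def sum.distrib)
  then have "has_bochner_integral P H (a0 + real n * v * aZ2 + ET * aT + ET2 * aT2)"
    using has_bochner_integral_PiM_normal_quadratic[OF v, where I = "{..<n}" and m = m and c = mb]
    unfolding H_poly P_def Z_def T_def ET2_def by simp
  then have "(\<integral>\<^sup>+x. ennreal (H x) \<partial>P) = ennreal (a0 + real n * v * aZ2 + ET * aT + ET2 * aT2)"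
    using H_nonneg by (subst nn_integral_eq_integral) (auto simp: has_bochner_integral_iff)
  also have "a0 + real n * v * aZ2 + ET * aT + ET2 * aT2 = v + real n * (mb - Yb)\<^sup>2 + real n * c\<^sup>2
      - 2 * real n * c * (b0 + (SA + (real n - 1) * v) / 2) / (\<alpha> - 1)
      + real n * (b0\<^sup>2 + b0 * ET + ET2 / 4) / ((\<alpha> - 1) * (\<alpha> - 2))"
    unfolding a0_def aZ2_def aZ_def aT_def aT2_def ET_def d_def[symmetric] unfolding k_def[symmetric]
    using nr k d by (simp add: field_simps power2_eq_square)
  finally show ?thesis
    using inner unfolding P_def[symmetric] by (metis (no_types, lifting) nn_integral_mono order_trans)
qed

lemma mean_term_error_le:
  fixes nn e c t W b0 :: real
  assumes nn: "nn \<ge> 10" and e: "e > -2" and t: "0 \<le> t" "t \<le> W" and c: "\<bar>c\<bar> \<le> W" and b0: "b0 > 0"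
  shows "2 * nn * c * t - 2 * nn * c * (2 * b0 + (nn - 1) * t) / (nn - 1 + e) \<le> 4 * W * (\<bar>e\<bar> * W + 2 * b0)"
proof -
  define K where "K = nn - 1 + e"
  have K: "nn / 2 \<le> K" "K > 0" using nn e by (auto simp: K_def)
  have ratio: "0 \<le> nn / K" "nn / K \<le> 2" using K nn by (auto simp: divide_le_eq)
  have "\<bar>e * t - 2 * b0\<bar> \<le> \<bar>e\<bar> * t + 2 * b0"
    using t b0 abs_triangle_ineq4[of "e * t" "2 * b0"] by (simp add: abs_mult)
  also have "\<dots> \<le> \<bar>e\<bar> * W + 2 * b0" using t by (simp add: mult_left_mono)
  finally have "\<bar>c * (e * t - 2 * b0)\<bar> \<le> W * (\<bar>e\<bar> * W + 2 * b0)"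
    unfolding abs_mult using c by (intro mult_mono) auto
  then have "c * (e * t - 2 * b0) * (nn / K) \<le> W * (\<bar>e\<bar> * W + 2 * b0) * 2"
    using ratio by (intro order.trans[OF mult_right_mono mult_mono]) auto
  moreover have "2 * nn * c * t - 2 * nn * c * (2 * b0 + (nn - 1) * t) / K = 2 * (c * (e * t - 2 * b0)) * (nn / K)"
    using K by (simp add: K_def field_simps)
  ultimately show ?thesis unfolding K_def by simp
qed

lemma second_moment_excess_le:
  fixes nn e t W b0 v V Q M :: real
  assumes nn: "nn \<ge> 1" and t: "0 \<le> t" "t \<le> W" and b0: "b0 > 0"
    and v: "0 \<le> v" "v \<le> V" and Q: "0 \<le> Q" "Q \<le> (nn - 1) * M" and M: "0 \<le> M"
  shows "4 * b0\<^sup>2 + 4 * b0 * ((nn - 1) * t + v) + ((nn - 1) * t + v)\<^sup>2 + 4 * Q * v + 2 * nn * v\<^sup>2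
           - t\<^sup>2 * ((nn - 1 + e) * (nn - 1 + e - 2))
         \<le> nn * (4 * b0\<^sup>2 + 4 * b0 * W + 4 * b0 * V + 2 * W * V + V\<^sup>2 + 4 * M * V + 2 * V\<^sup>2
                 + W\<^sup>2 * \<bar>2 * e - 2\<bar> + W\<^sup>2 * \<bar>e * (e - 2)\<bar>)"
proof -
  define m where "m = nn - 1"
  have m: "0 \<le> m" "m \<le> nn" using nn by (auto simp: m_def)
  have scale: "x \<le> nn * y" if "x \<le> y" "0 \<le> y" for x y
    using mult_right_mono[of 1 nn y] that nn by simp
  have mt: "0 \<le> m * t" "m * t \<le> nn * W" using m t by (auto intro: mult_mono)
  have t2: "t\<^sup>2 \<le> W\<^sup>2" and v2: "v\<^sup>2 \<le> V\<^sup>2" using t v by (auto intro: power_mono)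
  have "4 * b0 * (m * t) \<le> nn * (4 * b0 * W)" using mt b0 by (simp add: mult.left_commute)
  moreover have "2 * (m * t) * v \<le> nn * (2 * W * V)" using mt v nn mult_mono[OF mt(2) v(2)] by simp
  moreover have "4 * (Q * v) \<le> nn * (4 * M * V)"
    using Q v m M mult_mono[of Q "nn * M" v V] mult_right_mono[OF m(2) M] by (simp add: m_def mult_ac)
  moreover have "- (t\<^sup>2 * m * (2 * e - 2)) \<le> nn * (W\<^sup>2 * \<bar>2 * e - 2\<bar>)"
  proof -
    have "- (t\<^sup>2 * m * (2 * e - 2)) \<le> t\<^sup>2 * m * \<bar>2 * e - 2\<bar>"
      using m by (simp add: mult_left_mono abs_ge_minus_self flip: mult_minus_right)
    also have "\<dots> \<le> W\<^sup>2 * nn * \<bar>2 * e - 2\<bar>" using t2 m by (intro mult_right_mono mult_mono) auto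
    finally show ?thesis by (simp add: mult_ac)
  qed
  moreover have "- (t\<^sup>2 * (e * (e - 2))) \<le> nn * (W\<^sup>2 * \<bar>e * (e - 2)\<bar>)"
  proof -
    have "- (t\<^sup>2 * (e * (e - 2))) \<le> t\<^sup>2 * \<bar>e * (e - 2)\<bar>"
      using mult_left_mono[of "- (e * (e - 2))" "\<bar>e * (e - 2)\<bar>" "t\<^sup>2"] by simp
    also have "\<dots> \<le> W\<^sup>2 * \<bar>e * (e - 2)\<bar>" using t2 by (intro mult_right_mono) auto
    finally show ?thesis by (intro scale) auto
  qed
  moreover have "4 * b0\<^sup>2 \<le> nn * (4 * b0\<^sup>2)" "4 * b0 * v \<le> nn * (4 * b0 * V)" "v\<^sup>2 \<le> nn * V\<^sup>2"
    "2 * nn * v\<^sup>2 \<le> nn * (2 * V\<^sup>2)"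
    using b0 v v2 nn by (auto intro!: scale)
  ultimately show ?thesis
    unfolding m_def by (simp add: power2_eq_square algebra_simps)
qed

lemma second_moment_error_le:
  fixes nn e t W b0 v V Q M :: real
  assumes nn: "nn \<ge> 10" and e: "e > -2" and t: "0 \<le> t" "t \<le> W" and b0: "b0 > 0"
    and v: "0 \<le> v" "v \<le> V" and Q: "0 \<le> Q" "Q \<le> (nn - 1) * M"
  defines "C \<equiv> 4 * b0\<^sup>2 + 4 * b0 * W + 4 * b0 * V + 2 * W * V + V\<^sup>2 + 4 * M * V + 2 * V\<^sup>2
               + W\<^sup>2 * \<bar>2 * e - 2\<bar> + W\<^sup>2 * \<bar>e * (e - 2)\<bar>"
  shows "nn * (4 * b0\<^sup>2 + 4 * b0 * ((nn - 1) * t + v) + ((nn - 1) * t + v)\<^sup>2 + 4 * Q * v + 2 * nn * v\<^sup>2)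
           / ((nn - 1 + e) * (nn - 1 + e - 2)) - nn * t\<^sup>2 \<le> 4 * C"
proof -
  define X where "X = 4 * b0\<^sup>2 + 4 * b0 * ((nn - 1) * t + v) + ((nn - 1) * t + v)\<^sup>2 + 4 * Q * v + 2 * nn * v\<^sup>2"
  define K where "K = nn - 1 + e"
  have KK: "(nn / 2) * (nn / 2) \<le> K * (K - 2)" using nn e by (intro mult_mono) (auto simp: K_def)
  have "(nn / 2) * (nn / 2) > 0" using nn by simp
  then have KKpos: "K * (K - 2) > 0" using KK by linarith
  have "0 \<le> (nn - 1) * M" using Q by simp
  then have "0 \<le> M" using nn by (simp add: zero_le_mult_iff)
  then have excess: "X - t\<^sup>2 * (K * (K - 2)) \<le> nn * C"
    using second_moment_excess_le[OF _ t b0 v Q] nn by (simp add: X_def K_def C_def)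
  have "nn * X / (K * (K - 2)) - nn * t\<^sup>2 = nn * (X - t\<^sup>2 * (K * (K - 2))) / (K * (K - 2))"
  proof -
    have gen: "\<And>X y D. D \<noteq> 0 \<Longrightarrow> nn * X / D - nn * y = nn * (X - y * D) / D"
      by (simp add: field_simps)
    show ?thesis by (rule gen) (use KKpos in linarith)
  qed
  also have "\<dots> \<le> nn * (nn * C) / (K * (K - 2))"
    using excess KKpos nn by (intro divide_right_mono mult_left_mono) auto
  also have "\<dots> \<le> 4 * C"
  proof -
    have "0 \<le> C" unfolding C_def using b0 t v \<open>0 \<le> M\<close> by simp
    then have "((nn / 2) * (nn / 2)) * (4 * C) \<le> (K * (K - 2)) * (4 * C)"
      using KK by (intro mult_right_mono) auto
    then have "nn * (nn * C) \<le> 4 * C * (K * (K - 2))" by (simp add: algebra_simps)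
    then show ?thesis using KKpos by (simp add: divide_le_eq)
  qed
  finally show ?thesis unfolding X_def K_def .
qed

text \<open>The right-hand side of \<open>nn_integral_theta_A_update_le\<close> for the \<open>\<theta>\<close>-update means
  \<open>m i = (\<mu>' V + Y\<^sub>i A) / (V + A)\<close>, whose spread \<open>\<Sum>i. (m i - mb)\<^sup>2\<close> is \<open>u\<^sup>2 \<Delta>\<close>, without the
  term \<open>v + n (mb - Y\<^sub>b)\<^sup>2\<close> coming from \<open>\<theta>\<close>.\<close>
definition A_update_bound :: "real \<Rightarrow> real \<Rightarrow> real \<Rightarrow> real \<Rightarrow> nat \<Rightarrow> real \<Rightarrow> real \<Rightarrow> real" where
  "A_update_bound V a b0 A n \<Delta> c =
    (let u = A / (V + A); v = A * V / (V + A); \<alpha> = a + (real n - 1) / 2;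
         ET = u\<^sup>2 * \<Delta> + real n * v; ET2 = ET\<^sup>2 + (4 * u\<^sup>2 * \<Delta> * v + real n * (2 * v\<^sup>2))
     in real n * c\<^sup>2 - 2 * real n * c * (b0 + (u\<^sup>2 * \<Delta> + (real n - 1) * v) / 2) / (\<alpha> - 1)
        + real n * (b0\<^sup>2 + b0 * ET + ET2 / 4) / ((\<alpha> - 1) * (\<alpha> - 2)))"

definition A_update_const :: "real \<Rightarrow> real \<Rightarrow> real \<Rightarrow> real \<Rightarrow> real" where
  "A_update_const V a b0 M =
    (let W = M + V; e = 2 * a - 2
     in 4 * W * (\<bar>e\<bar> * W + 2 * b0)
        + 4 * (4 * b0\<^sup>2 + 4 * b0 * W + 4 * b0 * V + 2 * W * V + V\<^sup>2 + 4 * M * V + 2 * V\<^sup>2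
               + W\<^sup>2 * \<bar>2 * e - 2\<bar> + W\<^sup>2 * \<bar>e * (e - 2)\<bar>))"

lemma A_update_bound_eq:
  fixes n :: nat and V A a b0 \<Delta> c :: real
  assumes a: "a > 0" and n: "n \<ge> 5"
  defines "u \<equiv> A / (V + A)" and "v \<equiv> A * V / (V + A)" and "D \<equiv> \<Delta> / (real n - 1)"
  defines "t \<equiv> u\<^sup>2 * D + u * V" and "K \<equiv> real n - 1 + (2 * a - 2)"
  shows "A_update_bound V a b0 A n \<Delta> c = real n * c\<^sup>2 - 2 * real n * c * (2 * b0 + (real n - 1) * t) / K
      + real n * (4 * b0\<^sup>2 + 4 * b0 * ((real n - 1) * t + v) + ((real n - 1) * t + v)\<^sup>2
                  + 4 * (u\<^sup>2 * \<Delta>) * v + 2 * real n * v\<^sup>2) / (K * (K - 2))"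
proof -
  have "real n \<ge> 5" using n by simp
  then have \<Delta>: "\<Delta> = (real n - 1) * D" and K: "K > 2" using a by (simp_all add: D_def K_def)
  have mt: "u\<^sup>2 * \<Delta> + (real n - 1) * v = (real n - 1) * t"
    by (simp add: \<Delta> t_def u_def v_def algebra_simps)
  have ET: "u\<^sup>2 * \<Delta> + real n * v = (real n - 1) * t + v" using mt by (simp add: algebra_simps)
  have \<alpha>: "a + (real n - 1) / 2 - 1 = K / 2"
    "(a + (real n - 1) / 2 - 1) * (a + (real n - 1) / 2 - 2) = K * (K - 2) / 4"
    by (simp_all add: K_def field_simps)
  have "A_update_bound V a b0 A n \<Delta> c
      = real n * c\<^sup>2 - 2 * real n * c * (b0 + (real n - 1) * t / 2) / (K / 2)
        + real n * (b0\<^sup>2 + b0 * ((real n - 1) * t + v)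
          + (((real n - 1) * t + v)\<^sup>2 + (4 * u\<^sup>2 * \<Delta> * v + real n * (2 * v\<^sup>2))) / 4) / (K * (K - 2) / 4)"
    unfolding A_update_bound_def Let_def u_def[symmetric] v_def[symmetric] ET \<alpha>(2)
    unfolding \<alpha>(1) mt by simp
  also have "\<dots> = real n * c\<^sup>2 - 2 * real n * c * (2 * b0 + (real n - 1) * t) / K
      + real n * (4 * b0\<^sup>2 + 4 * b0 * ((real n - 1) * t + v) + ((real n - 1) * t + v)\<^sup>2
                  + 4 * (u\<^sup>2 * \<Delta>) * v + 2 * real n * v\<^sup>2) / (K * (K - 2))"
    using K by (simp add: field_simps)
  finally show ?thesis .
qed

text \<open>\<open>t = u\<^sup>2 D + u V\<close> is, up to \<open>O(1/n)\<close>, the mean of the updated \<open>A\<close>.\<close>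
lemma A_update_bound_le:
  fixes n :: nat
  assumes V: "V > 0" and a: "a > 0" and b0: "b0 > 0" and A: "A > 0" and n: "n \<ge> 10"
    and \<Delta>: "\<Delta> \<ge> 0" and \<Delta>M: "\<Delta> / (real n - 1) \<le> M"
  defines "u \<equiv> A / (V + A)" and "D \<equiv> \<Delta> / (real n - 1)"
  shows "A_update_bound V a b0 A n \<Delta> (D - V)
           \<le> real n * ((D - V) - (u\<^sup>2 * D + u * V))\<^sup>2 + A_update_const V a b0 M"
proof -
  define nn where "nn = real n"
  define v where "v = A * V / (V + A)"
  define t where "t = u\<^sup>2 * D + u * V"
  define c where "c = D - V"
  define W where "W = M + V"
  define e where "e = 2 * a - 2"
  have nn: "nn \<ge> 10" using n by (simp add: nn_def)
  have \<Delta>_eq: "\<Delta> = (nn - 1) * D" using nn by (simp add: D_def nn_def)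
  have D: "0 \<le> D" "D \<le> M" using \<Delta> \<Delta>M nn by (simp_all add: D_def nn_def)
  have u: "0 < u" "u < 1" using V A by (auto simp: u_def)
  have u2: "u\<^sup>2 \<le> 1" using u by (simp add: power_le_one)
  have v_u: "v = u * V" by (simp add: v_def u_def)
  have uV: "u * V \<le> V" and u2D: "u\<^sup>2 * D \<le> D"
    using u u2 V D by (auto intro!: mult_left_le_one_le)
  have v: "0 \<le> v" "v \<le> V" using u V uV by (auto simp: v_u)
  have t: "0 \<le> t" "t \<le> W"
    using u D V add_mono[OF u2D uV] by (simp_all add: t_def W_def)
  have c: "\<bar>c\<bar> \<le> W" using D V by (auto simp: c_def W_def)
  have Q: "0 \<le> u\<^sup>2 * \<Delta>" "u\<^sup>2 * \<Delta> \<le> (nn - 1) * M"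
    using \<Delta> mult_right_mono[OF u2 \<Delta>] D nn by (auto simp: \<Delta>_eq intro: order.trans)
  have e: "e > -2" using a by (simp add: e_def)
  have "A_update_bound V a b0 A n \<Delta> c = nn * c\<^sup>2 - 2 * nn * c * (2 * b0 + (nn - 1) * t) / (nn - 1 + e)
      + nn * (4 * b0\<^sup>2 + 4 * b0 * ((nn - 1) * t + v) + ((nn - 1) * t + v)\<^sup>2 + 4 * (u\<^sup>2 * \<Delta>) * v
              + 2 * nn * v\<^sup>2) / ((nn - 1 + e) * (nn - 1 + e - 2))"
    using A_update_bound_eq[OF a, of n] n
    by (simp add: nn_def e_def u_def v_def t_def D_def)
  also have "\<dots> \<le> nn * (c - t)\<^sup>2 + A_update_const V a b0 M"
  proof -
    have "nn * c\<^sup>2 = nn * (c - t)\<^sup>2 + 2 * nn * c * t - nn * t\<^sup>2" by (simp add: power2_eq_square algebra_simps)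
    then show ?thesis
      using mean_term_error_le[OF nn e t c b0] second_moment_error_le[OF nn e t b0 v Q]
      unfolding A_update_const_def Let_def W_def[symmetric] e_def[symmetric] by (simp add: mult_ac)
  qed
  finally show ?thesis by (simp add: c_def t_def nn_def)
qed

text \<open>\<open>q = 1 - u\<^sup>2\<close>, so \<open>q\<close> maps the distance of \<open>A\<close> from \<open>D - V\<close> to that of \<open>t = u\<^sup>2 D + u V\<close>.\<close>
lemma gibbs_contraction:
  fixes V A D :: real
  assumes V: "V > 0" and A: "A > 0"
  defines "u \<equiv> A / (V + A)" and "r \<equiv> V / (V + A)" and "q \<equiv> (V\<^sup>2 + 2 * V * A) / (V\<^sup>2 + 2 * V * A + A\<^sup>2)"
  shows "q * ((D - V) - A) = (D - V) - (u\<^sup>2 * D + u * V)"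
    and "0 \<le> r" "r \<le> q" "r\<^sup>2 * A \<le> V"
proof -
  have VA: "V + A > 0" using V A by simp
  have u: "0 < u" "u < 1" "u * (V + A) = A" using V A by (auto simp: u_def)
  have r: "r = 1 - u" using VA by (simp add: r_def u_def field_simps)
  have q: "q = 1 - u\<^sup>2"
  proof -
    have "V\<^sup>2 + 2 * V * A + A\<^sup>2 = (V + A)\<^sup>2" "V\<^sup>2 + 2 * V * A = (V + A)\<^sup>2 - A\<^sup>2"
      by (simp_all add: power2_eq_square algebra_simps)
    then show ?thesis using VA by (simp add: q_def u_def diff_divide_distrib power_divide)
  qed
  have "(1 - u\<^sup>2) * (D - V - A) = D - V - u\<^sup>2 * D - u * V + (u * (V + A) - A) * (1 + u)"
    by (simp add: algebra_simps power2_eq_square)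
  then show "q * ((D - V) - A) = (D - V) - (u\<^sup>2 * D + u * V)" unfolding q u(3) by simp
  show "0 \<le> r" using V A by (simp add: r_def)
  have "u\<^sup>2 \<le> u" using u by (simp add: power2_eq_square mult_le_cancel_right1)
  then show "r \<le> q" by (simp add: r q)
  have "r * A = u * V" by (simp add: r_def u_def)
  then have "r\<^sup>2 * A = r * (u * V)" by (simp add: power2_eq_square mult.assoc)
  also have "\<dots> \<le> 1 * (1 * V)" using u V by (intro mult_mono) (auto simp: r)
  finally show "r\<^sup>2 * A \<le> V" by simp
qed

lemma expected_drift_le:
  fixes n :: nat and \<theta>b Yb :: real
  assumes V: "V > 0" and a: "a > 0" and b0: "b0 > 0" and A: "A > 0" and n: "n \<ge> 10"
    and \<Delta>: "\<Delta> \<ge> 0" and \<Delta>M: "\<Delta> / (real n - 1) \<le> M"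
  defines "r \<equiv> V / (V + A)" and "q \<equiv> (V\<^sup>2 + 2 * V * A) / (V\<^sup>2 + 2 * V * A + A\<^sup>2)"
  shows "A * V / (V + A) + max (A_update_bound V a b0 A n \<Delta> (\<Delta> / (real n - 1) - V)) 0
           + real n * r\<^sup>2 * (\<theta>b - Yb)\<^sup>2 + r\<^sup>2 * A
         \<le> q\<^sup>2 * (real n * (\<theta>b - Yb)\<^sup>2 + real n * ((\<Delta> / (real n - 1) - V) - A)\<^sup>2)
           + (2 * V + A_update_const V a b0 M)"
proof -
  note contr = gibbs_contraction(2-4)[OF V A, folded r_def q_def]
  note contr_eq = gibbs_contraction(1)[OF V A, of "\<Delta> / (real n - 1)", folded q_def]
  define X where "X = real n * ((\<Delta> / (real n - 1) - V) - A)\<^sup>2"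
  have "0 \<le> \<Delta> / (real n - 1)" using \<Delta> n by simp
  then have "0 \<le> A_update_const V a b0 M"
    using \<Delta>M V b0 unfolding A_update_const_def Let_def
    by (intro add_nonneg_nonneg mult_nonneg_nonneg) auto
  moreover have "q\<^sup>2 * X
      = real n * ((\<Delta> / (real n - 1) - V) - ((A / (V + A))\<^sup>2 * (\<Delta> / (real n - 1)) + A / (V + A) * V))\<^sup>2"
    unfolding X_def contr_eq[symmetric] by (simp add: power_mult_distrib)
  moreover have "0 \<le> q\<^sup>2 * X" by (simp add: X_def)
  ultimately have "max (A_update_bound V a b0 A n \<Delta> (\<Delta> / (real n - 1) - V)) 0
      \<le> q\<^sup>2 * X + A_update_const V a b0 M"
    using A_update_bound_le[OF assms(1-7)] by linarith
  moreover have "real n * r\<^sup>2 * (\<theta>b - Yb)\<^sup>2 \<le> q\<^sup>2 * (real n * (\<theta>b - Yb)\<^sup>2)"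
  proof -
    have "r\<^sup>2 \<le> q\<^sup>2" using contr(1,2) by (intro power_mono) auto
    from mult_right_mono[OF this, of "real n * (\<theta>b - Yb)\<^sup>2"] show ?thesis by (simp add: mult_ac)
  qed
  moreover have "A * V / (V + A) \<le> V" using V A by (simp add: field_simps)
  ultimately show ?thesis
    using contr(3) unfolding distrib_left X_def[symmetric] by linarith
qed

lemma nn_integral_normal_M_quadratic:
  assumes s: "s > 0" and "K \<ge> 0" "w \<ge> 0"
  shows "(\<integral>\<^sup>+x. ennreal (K + w * (x - y)\<^sup>2) \<partial>normal_M m s) = ennreal (K + w * ((m - y)\<^sup>2 + s))"
proof -
  have "K + w * (x - y)\<^sup>2 = (K + w * (m - y)\<^sup>2) + 2 * w * (m - y) * (x - m) + w * (x - m)^2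
      + 0 * (x - m)^3 + 0 * (x - m)^4" for x
    by (simp add: power2_eq_square algebra_simps)
  note quad = integral_normal_M_quartic[OF s this]
  have "(\<integral>\<^sup>+x. ennreal (K + w * (x - y)\<^sup>2) \<partial>normal_M m s)
      = ennreal (integral\<^sup>L (normal_M m s) (\<lambda>x. K + w * (x - y)\<^sup>2))"
    using quad(1) assms by (intro nn_integral_eq_integral) auto
  then show ?thesis unfolding quad(2) by (simp add: algebra_simps)
qed

lemma gibbs_theta_means:
  fixes Y :: "nat \<Rightarrow> nat \<Rightarrow> real" and n :: nat and V A \<mu>' :: real
  assumes n: "n > 0" and VA: "V + A > 0" and m: "\<And>i. m i = (\<mu>' * V + Y n i * A) / (V + A)"
  defines "mb \<equiv> (\<Sum>i<n. m i) / real n"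
  shows "mb - Ybar Y n = V / (V + A) * (\<mu>' - Ybar Y n)"
    and "(\<Sum>i<n. (m i - mb)\<^sup>2) = (A / (V + A))\<^sup>2 * Delta Y n"
proof -
  have sum_m: "(\<Sum>i<n. m i) = (real n * \<mu>' * V + (\<Sum>i<n. Y n i) * A) / (V + A)"
    by (simp add: m sum_divide_distrib[symmetric] sum.distrib sum_distrib_right)
  have mb: "mb = (\<mu>' * V + Ybar Y n * A) / (V + A)"
    unfolding mb_def sum_m Ybar_def using n VA by (simp add: field_simps)
  then show "mb - Ybar Y n = V / (V + A) * (\<mu>' - Ybar Y n)"
    using VA by (simp add: field_simps)
  have dev: "m i - mb = A / (V + A) * (Y n i - Ybar Y n)" for i
    unfolding mb m by (simp add: diff_divide_distrib[symmetric] algebra_simps)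
  show "(\<Sum>i<n. (m i - mb)\<^sup>2) = (A / (V + A))\<^sup>2 * Delta Y n"
    unfolding dev Delta_def power_mult_distrib sum_distrib_left ..
qed

lemma nn_integral_gibbs_theta_A_le:
  fixes Y :: "nat \<Rightarrow> nat \<Rightarrow> real" and n :: nat
  assumes V: "V > 0" and a: "a > 0" and b0: "b0 > 0" and A: "A > 0" and n: "n \<ge> 5"
  shows "(\<integral>\<^sup>+\<theta>'. (\<integral>\<^sup>+A'. ennreal (drift_f Y V n A' \<theta>')
            \<partial>inv_gamma_M (a + (real n - 1) / 2) (b0 + (1/2) * (\<Sum>i<n. (\<theta>' i - theta_bar n \<theta>')\<^sup>2)))
          \<partial>Pi\<^sub>M {..<n} (\<lambda>i. normal_M ((\<mu>' * V + Y n i * A) / (V + A)) (A * V / (V + A))))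
    \<le> ennreal ((A * V / (V + A) + max (A_update_bound V a b0 A n (Delta Y n) (Delta Y n / (real n - 1) - V)) 0)
               + real n * (V / (V + A))\<^sup>2 * (\<mu>' - Ybar Y n)\<^sup>2)"
proof -
  define m where "m = (\<lambda>i. (\<mu>' * V + Y n i * A) / (V + A))"
  define mb where "mb = (\<Sum>i<n. m i) / real n"
  define v where "v = A * V / (V + A)"
  have n0: "n > 0" and VA: "V + A > 0" and v0: "v > 0" using n V A by (auto simp: v_def)
  have "real n \<ge> 5" using n by simp
  then have \<alpha>: "a + (real n - 1) / 2 > 2" using a by (simp add: field_simps)
  have "m i = (\<mu>' * V + Y n i * A) / (V + A)" for i by (simp add: m_def)
  note means = gibbs_theta_means[where Y = Y and \<mu>' = \<mu>' and m = m, OF n0 VA this, folded mb_def]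
  have "(\<integral>\<^sup>+\<theta>'. (\<integral>\<^sup>+A'. ennreal (drift_f Y V n A' \<theta>')
            \<partial>inv_gamma_M (a + (real n - 1) / 2) (b0 + (1/2) * (\<Sum>i<n. (\<theta>' i - theta_bar n \<theta>')\<^sup>2)))
          \<partial>Pi\<^sub>M {..<n} (\<lambda>i. normal_M ((\<mu>' * V + Y n i * A) / (V + A)) (A * V / (V + A))))
      \<le> ennreal (v + real n * (mb - Ybar Y n)\<^sup>2 + real n * (Delta Y n / (real n - 1) - V)\<^sup>2
           - 2 * real n * (Delta Y n / (real n - 1) - V)
               * (b0 + ((\<Sum>i<n. (m i - mb)\<^sup>2) + (real n - 1) * v) / 2) / (a + (real n - 1) / 2 - 1)
           + real n * (b0\<^sup>2 + b0 * ((\<Sum>i<n. (m i - mb)\<^sup>2) + real n * v)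
              + (((\<Sum>i<n. (m i - mb)\<^sup>2) + real n * v)\<^sup>2 + (\<Sum>i<n. 4 * (m i - mb)\<^sup>2 * v + 2 * v\<^sup>2)) / 4)
             / ((a + (real n - 1) / 2 - 1) * (a + (real n - 1) / 2 - 2)))"
  proof -
    have "(\<lambda>i. normal_M ((\<mu>' * V + Y n i * A) / (V + A)) (A * V / (V + A))) = (\<lambda>i. normal_M (m i) v)"
      by (simp add: m_def v_def)
    then show ?thesis
      unfolding drift_f_def mb_def by (simp only: nn_integral_theta_A_update_le[OF v0 n0 \<alpha> b0])
  qed
  also have "\<dots> = ennreal (v + A_update_bound V a b0 A n (Delta Y n) (Delta Y n / (real n - 1) - V)
      + real n * (V / (V + A))\<^sup>2 * (\<mu>' - Ybar Y n)\<^sup>2)"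
  proof -
    let ?S = "\<Sum>i<n. (m i - mb)\<^sup>2" and ?\<alpha> = "a + (real n - 1) / 2"
      and ?c = "Delta Y n / (real n - 1) - V"
    have sum4: "(\<Sum>i<n. 4 * (m i - mb)\<^sup>2 * v + 2 * v\<^sup>2) = 4 * ?S * v + real n * (2 * v\<^sup>2)"
      by (simp add: sum.distrib sum_distrib_left sum_distrib_right mult_ac)
    have "A_update_bound V a b0 A n (Delta Y n) ?c
        = real n * ?c\<^sup>2 - 2 * real n * ?c * (b0 + (?S + (real n - 1) * v) / 2) / (?\<alpha> - 1)
           + real n * (b0\<^sup>2 + b0 * (?S + real n * v)
              + ((?S + real n * v)\<^sup>2 + (\<Sum>i<n. 4 * (m i - mb)\<^sup>2 * v + 2 * v\<^sup>2)) / 4)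
             / ((?\<alpha> - 1) * (?\<alpha> - 2))"
      unfolding A_update_bound_def Let_def v_def[symmetric] unfolding sum4
      by (simp only: means(2) mult.assoc)
    moreover have "real n * (mb - Ybar Y n)\<^sup>2 = real n * (V / (V + A))\<^sup>2 * (\<mu>' - Ybar Y n)\<^sup>2"
      by (simp only: means(1) power_mult_distrib mult.assoc)
    ultimately show ?thesis by (intro arg_cong[where f = ennreal]) linarith
  qed
  also have "\<dots> \<le> ennreal ((v + max (A_update_bound V a b0 A n (Delta Y n) (Delta Y n / (real n - 1) - V)) 0)
      + real n * (V / (V + A))\<^sup>2 * (\<mu>' - Ybar Y n)\<^sup>2)"
    by (intro ennreal_leI) simp
  finally show ?thesis unfolding v_def .
qed

theorem mainTheorem2:
  fixes Y :: "nat \<Rightarrow> nat \<Rightarrow> real" and V a b0 :: real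
  assumes hV: "V > 0" and ha: "a > 0" and hb0: "b0 > 0"
    and hA: "\<exists>\<delta> M N0. \<delta> > 0 \<and>
               (\<forall>n\<ge>2. Delta Y n / (real n - 1) \<le> M) \<and>
               (\<forall>n\<ge>max 2 N0. Delta Y n / (real n - 1) \<ge> V + \<delta>)"
  shows "\<exists>B N. \<forall>n\<ge>N. \<forall>A \<mu> \<theta>. A > 0 \<longrightarrow>
           gibbs_expect Y V a b0 n (\<lambda>A' \<mu>' \<theta>'. drift_f Y V n A' \<theta>') A \<mu> \<theta>
           \<le> ennreal (((V\<^sup>2 + 2 * V * A) / (V\<^sup>2 + 2 * V * A + A\<^sup>2))\<^sup>2 * drift_f Y V n A \<theta> + B)"
proof -
  \<comment> \<open>only the upper bound of Assumption (A) is needed\<close>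
  obtain M where M: "\<And>n. n \<ge> 2 \<Longrightarrow> Delta Y n / (real n - 1) \<le> M"
    using hA by blast
  show ?thesis
  proof (intro exI[of _ "2 * V + A_update_const V a b0 M"] exI[of _ "10::nat"] allI impI)
    fix n :: nat and A \<mu> :: real and \<theta> :: "nat \<Rightarrow> real"
    assume n: "n \<ge> 10" and A: "A > 0"
    define K where "K = A * V / (V + A) + max (A_update_bound V a b0 A n (Delta Y n) (Delta Y n / (real n - 1) - V)) 0"
    define w where "w = real n * (V / (V + A))\<^sup>2"
    have "gibbs_expect Y V a b0 n (\<lambda>A' \<mu>' \<theta>'. drift_f Y V n A' \<theta>') A \<mu> \<theta>
        \<le> (\<integral>\<^sup>+\<mu>'. ennreal (K + w * (\<mu>' - Ybar Y n)\<^sup>2) \<partial>normal_M (theta_bar n \<theta>) (A / real n))"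
      unfolding gibbs_expect_def K_def w_def
      using nn_integral_gibbs_theta_A_le[OF hV ha hb0 A] n by (intro nn_integral_mono) simp
    also have "\<dots> = ennreal (K + w * ((theta_bar n \<theta> - Ybar Y n)\<^sup>2 + A / real n))"
      using hV A n by (intro nn_integral_normal_M_quadratic) (auto simp: K_def w_def)
    also have "\<dots> \<le> ennreal (((V\<^sup>2 + 2 * V * A) / (V\<^sup>2 + 2 * V * A + A\<^sup>2))\<^sup>2 * drift_f Y V n A \<theta>
        + (2 * V + A_update_const V a b0 M))"
      using expected_drift_le[OF hV ha hb0 A n _ M, of "theta_bar n \<theta>" "Ybar Y n"] n
      by (intro ennreal_leI) (simp add: K_def w_def drift_f_def Delta_def sum_nonneg distrib_left)
    finally show "gibbs_expect Y V a b0 n (\<lambda>A' \<mu>' \<theta>'. drift_f Y V n A' \<theta>') A \<mu> \<theta>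
        \<le> ennreal (((V\<^sup>2 + 2 * V * A) / (V\<^sup>2 + 2 * V * A + A\<^sup>2))\<^sup>2 * drift_f Y V n A \<theta>
          + (2 * V + A_update_const V a b0 M))" .
  qed
qed

end
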